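(* Let $G$ be a countable group and let $H\triangleleft G$ be a normal subgroup which is a torsion group (every element of $H$ has finite order). Then $G/H$ is algebraically recurrent if and only if $G$ is algebraically recurrent.
   Context: For a countable group $G$ and a probability measure $\mu$ on $G$, a $\mu$-random walk is $X_n=\zeta_1\cdots\zeta_n$ with $\zeta_i$ i.i.d. of law $\mu$. Let $\mathcal{S}_n$ be the semigroup (not subgroup) generated by $\{X_n,X_{n+1},\ldots\}$. The pair $(G,\mu)$ is algebraically recurrent (AR) if for every $n$, $\mathcal{S}_n=G$ almost surely. The group $G$ is AR if $(G,\mu)$ is AR for every symmetric probability measure $\mu$ (i.e. $\mu(g)=\mu(g^{-1})$) whose support generates $G$ as a group. *)

theory Defs
  imports "HOL-Algebra.Algebra" "HOL-Probability.Probability"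
begin

inductive_set semigroup_gen :: "('a, 'b) monoid_scheme \<Rightarrow> 'a set \<Rightarrow> 'a set"
  for G and A
  where
    sg_incl: "a \<in> A \<Longrightarrow> a \<in> semigroup_gen G A"
  | sg_mult: "a \<in> semigroup_gen G A \<Longrightarrow> b \<in> semigroup_gen G A \<Longrightarrow> a \<otimes>\<^bsub>G\<^esub> b \<in> semigroup_gen G A"

text \<open>Random walk: the increments are the stream entries, zeta_(i+1) = w !! i,
  and X_n = zeta_1 ... zeta_n (X_0 = identity).\<close>
primrec rwalk :: "('a, 'b) monoid_scheme \<Rightarrow> 'a stream \<Rightarrow> nat \<Rightarrow> 'a" where
  "rwalk G w 0 = \<one>\<^bsub>G\<^esub>"
| "rwalk G w (Suc n) = rwalk G w n \<otimes>\<^bsub>G\<^esub> (w !! n)"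

text \<open>The i.i.d. increments with law mu are the
  coordinates of the product measure stream_space (measure_pmf mu).\<close>
definition AR_pair :: "('a, 'b) monoid_scheme \<Rightarrow> 'a pmf \<Rightarrow> bool" where
  "AR_pair G \<mu> \<longleftrightarrow>
     (\<forall>n\<ge>1. AE w in stream_space (measure_pmf \<mu>).
        semigroup_gen G {rwalk G w m | m. m \<ge> n} = carrier G)"

definition symmetric_pmf :: "('a, 'b) monoid_scheme \<Rightarrow> 'a pmf \<Rightarrow> bool" where
  "symmetric_pmf G \<mu> \<longleftrightarrow> (\<forall>g\<in>carrier G. pmf \<mu> g = pmf \<mu> (inv\<^bsub>G\<^esub> g))"

definition AR_group :: "('a, 'b) monoid_scheme \<Rightarrow> bool" where
  "AR_group G \<longleftrightarrow>
     (\<forall>\<mu> :: 'a pmf. set_pmf \<mu> \<subseteq> carrier G \<and> symmetric_pmf G \<mu>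
        \<and> generate G (set_pmf \<mu>) = carrier G \<longrightarrow> AR_pair G \<mu>)"

definition torsion_subgroup :: "('a, 'b) monoid_scheme \<Rightarrow> 'a set \<Rightarrow> bool" where
  "torsion_subgroup G H \<longleftrightarrow> (\<forall>h\<in>H. \<exists>n::nat. n > 0 \<and> h [^]\<^bsub>G\<^esub> n = \<one>\<^bsub>G\<^esub>)"

end

theory Submission
  imports Defs
begin

(*
  The quotient map pi : G -> G/H sends the walk driven by nu to the walk driven by the
  image measure of nu, and each tail semigroup S_n onto the corresponding tail semigroup of
  the image walk. So if G is algebraically recurrent, so is G/H, once every symmetric
  generating measure on G/H is lifted to one on G: spread each coset with full support
  over its countably many elements, then symmetrize.

  Conversely, suppose pi(S_n) = G/H. For s in S_n choose t in S_n in the coset of inv s.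
  Then u = s t lies in the torsion group H, so inv u = u^j for some j >= 0, and
  inv s = t u^j lies in S_n. Hence S_n is a subgroup. Almost surely every point x of the
  support occurs as an increment x = inv X_m X_(m+1) with m >= n, so S_n contains a
  generating set of G.
*)

section \<open>Semigroups generated by random walks\<close>

abbreviation tail_semigroup :: "('a, 'b) monoid_scheme \<Rightarrow> 'a stream \<Rightarrow> nat \<Rightarrow> 'a set" where
  "tail_semigroup G w n \<equiv> semigroup_gen G {rwalk G w m | m. m \<ge> n}"

lemma semigroup_gen_subset:
  assumes "monoid G" "A \<subseteq> carrier G"
  shows "semigroup_gen G A \<subseteq> carrier G"
proof
  fix x assume "x \<in> semigroup_gen G A"
  then show "x \<in> carrier G"
    by induct (use assms in \<open>auto intro: monoid.m_closed\<close>)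
qed

lemma semigroup_gen_image:
  assumes "group_hom G K f" "A \<subseteq> carrier G"
  shows "semigroup_gen K (f ` A) = f ` semigroup_gen G A"
proof
  interpret group_hom G K f by fact
  note closed = semigroup_gen_subset[OF G.monoid_axioms assms(2)]
  show "semigroup_gen K (f ` A) \<subseteq> f ` semigroup_gen G A"
  proof
    fix y assume "y \<in> semigroup_gen K (f ` A)"
    then show "y \<in> f ` semigroup_gen G A"
    proof induct
      case (sg_mult a b)
      then obtain x y where "x \<in> semigroup_gen G A" "y \<in> semigroup_gen G A" "a = f x" "b = f y"
        by auto
      with subsetD[OF closed] show ?case
        by (auto intro!: image_eqI[where x = "x \<otimes>\<^bsub>G\<^esub> y"] semigroup_gen.sg_mult)
    qed (auto intro: semigroup_gen.sg_incl)
  qed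
  show "f ` semigroup_gen G A \<subseteq> semigroup_gen K (f ` A)"
  proof clarify
    fix x assume "x \<in> semigroup_gen G A"
    then show "f x \<in> semigroup_gen K (f ` A)"
    proof induct
      case (sg_mult a b)
      with subsetD[OF closed] show ?case by (auto intro: semigroup_gen.sg_mult)
    qed (auto intro: semigroup_gen.sg_incl)
  qed
qed

fun lprod :: "('a, 'b) monoid_scheme \<Rightarrow> 'a list \<Rightarrow> 'a" where
  "lprod G [] = \<one>\<^bsub>G\<^esub>"
| "lprod G [x] = x"
| "lprod G (x # y # xs) = x \<otimes>\<^bsub>G\<^esub> lprod G (y # xs)"

lemma lprod_Cons: "ys \<noteq> [] \<Longrightarrow> lprod G (x # ys) = x \<otimes>\<^bsub>G\<^esub> lprod G ys"
  by (cases ys) auto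

lemma lprod_closed: "monoid G \<Longrightarrow> set xs \<subseteq> carrier G \<Longrightarrow> lprod G xs \<in> carrier G"
  by (induct G xs rule: lprod.induct) (auto intro: monoid.m_closed)

lemma lprod_append:
  assumes G: "monoid G" and "xs \<noteq> []" "ys \<noteq> []" "set xs \<subseteq> carrier G" "set ys \<subseteq> carrier G"
  shows "lprod G (xs @ ys) = lprod G xs \<otimes>\<^bsub>G\<^esub> lprod G ys"
  using assms(2,4)
proof (induct xs)
  case (Cons x xs)
  show ?case
  proof (cases "xs = []")
    case False
    with Cons assms(3,5) show ?thesis
      by (simp add: lprod_Cons monoid.m_assoc[OF G] lprod_closed[OF G])
  qed (use assms(3) in \<open>simp add: lprod_Cons\<close>)
qed simp

lemma semigroup_gen_iff_lprod:
  assumes "monoid G" "A \<subseteq> carrier G"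
  shows "a \<in> semigroup_gen G A \<longleftrightarrow> (\<exists>xs. xs \<noteq> [] \<and> set xs \<subseteq> A \<and> a = lprod G xs)"
proof
  assume "a \<in> semigroup_gen G A"
  then show "\<exists>xs. xs \<noteq> [] \<and> set xs \<subseteq> A \<and> a = lprod G xs"
  proof induct
    case (sg_incl a)
    then show ?case by (intro exI[of _ "[a]"]) auto
  next
    case (sg_mult a b)
    then obtain xs ys where "xs \<noteq> []" "set xs \<subseteq> A" "a = lprod G xs"
      and "ys \<noteq> []" "set ys \<subseteq> A" "b = lprod G ys"
      by blast
    with assms show ?case
      by (intro exI[of _ "xs @ ys"]) (auto simp: lprod_append)
  qed
next
  assume "\<exists>xs. xs \<noteq> [] \<and> set xs \<subseteq> A \<and> a = lprod G xs"
  then obtain xs where xs: "xs \<noteq> []" "set xs \<subseteq> A" "a = lprod G xs"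
    by blast
  have "lprod G xs \<in> semigroup_gen G A" if "xs \<noteq> []" "set xs \<subseteq> A"
    using that
  proof (induct xs)
    case (Cons x xs)
    then show ?case
      by (cases "xs = []") (auto simp: lprod_Cons intro: semigroup_gen.intros)
  qed simp
  with xs show "a \<in> semigroup_gen G A" by simp
qed

context normal
begin

lemma quotient_map_hom: "group_hom G (G Mod H) (\<lambda>x. H #> x)"
  using r_coset_hom_Mod factorgroup_is_group is_group
  by (simp add: group_hom_def group_hom_axioms_def)

lemma subsemigroup_onto_quotient_is_subgroup:
  assumes torsion: "torsion_subgroup G H"
    and S: "S \<subseteq> carrier G" "\<And>a b. a \<in> S \<Longrightarrow> b \<in> S \<Longrightarrow> a \<otimes> b \<in> S"
    and onto: "carrier (G Mod H) \<subseteq> (\<lambda>x. H #> x) ` S"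
  shows "subgroup S G"
proof -
  have inv_closed: "inv s \<in> S" if s: "s \<in> S" for s
  proof -
    have sG: "s \<in> carrier G" using s S(1) by auto
    have "H #> inv s \<in> carrier (G Mod H)" using sG by (auto simp: carrier_FactGroup)
    then obtain t where t: "t \<in> S" "H #> t = H #> inv s" using onto by auto
    have tG: "t \<in> carrier G" using t S(1) by auto
    have "t \<in> H #> inv s" using t(2) tG by (metis rcos_self subgroup_axioms)
    then obtain h where h: "h \<in> H" "t = h \<otimes> inv s" unfolding r_coset_def by auto
    define u where "u = s \<otimes> t"
    have uS: "u \<in> S" using s t S(2) by (simp add: u_def)
    have uG: "u \<in> carrier G" using uS S(1) by auto
    have "u \<in> H" unfolding u_def h(2) using h(1) sG subset
      by (metis inv_closed inv_op_closed2 m_assoc subsetD)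
    then obtain k :: nat where k: "k > 0" "u [^] k = \<one>"
      using torsion unfolding torsion_subgroup_def by auto
    have pow_in_S: "u [^] Suc j \<in> S" for j
      by (induct j) (use uS uG S(2) in \<open>auto simp: nat_pow_Suc2\<close>)
    obtain j where j: "k = Suc j" using k(1) gr0_implies_Suc by blast
    have "u [^] j \<otimes> u = \<one>" using k(2) j by (simp add: nat_pow_Suc)
    then have inv_u: "inv u = u [^] j" using uG by (metis inv_equality nat_pow_closed)
    have "inv s = t \<otimes> inv u" unfolding u_def using sG tG
      by (simp add: inv_mult_group m_assoc[symmetric])
    moreover have "t \<otimes> inv u \<in> S"
    proof (cases j)
      case 0
      then show ?thesis using t(1) tG by (simp add: inv_u)
    next
      case (Suc i)
      then show ?thesis using t(1) pow_in_S S(2) by (simp add: inv_u)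
    qed
    ultimately show ?thesis by simp
  qed
  have "H #> \<one> \<in> carrier (G Mod H)" by (auto simp: carrier_FactGroup)
  then obtain s where "s \<in> S" using onto by auto
  then have "\<one> \<in> S" using inv_closed S by (metis r_inv subsetD)
  then show ?thesis using S inv_closed by (auto intro: subgroup.intro)
qed

end

lemma rwalk_closed:
  assumes "monoid G" "w \<in> streams (carrier G)"
  shows "rwalk G w m \<in> carrier G"
  by (induct m) (use assms in \<open>auto intro: monoid.m_closed snth_in\<close>)

lemma rwalk_hom:
  assumes "group_hom G K f" "w \<in> streams (carrier G)"
  shows "rwalk K (smap f w) m = f (rwalk G w m)"
proof (induct m)
  interpret group_hom G K f by fact
  case (Suc m)
  with assms(2) show ?case by (simp add: rwalk_closed snth_in)
qed (use assms(1) in \<open>simp add: group_hom.hom_one\<close>)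

lemma rwalk_shift_stake: "m \<le> k \<Longrightarrow> rwalk G (stake k w @- u) m = rwalk G w m"
  by (induct m) (auto simp: shift_snth_less)

lemma tail_semigroup_image:
  assumes "group_hom G K f" "w \<in> streams (carrier G)"
  shows "tail_semigroup K (smap f w) n = f ` tail_semigroup G w n"
proof -
  have "{rwalk K (smap f w) m | m. m \<ge> n} = f ` {rwalk G w m | m. m \<ge> n}"
    using rwalk_hom[OF assms] by auto
  moreover have "{rwalk G w m | m. m \<ge> n} \<subseteq> carrier G"
    using rwalk_closed[OF group_hom.axioms(1)[OF assms(1), THEN group.is_monoid] assms(2)] by auto
  ultimately show ?thesis using semigroup_gen_image[OF assms(1)] by simp
qed

lemma (in normal) tail_semigroup_eq_carrier_if_quotient:
  assumes torsion: "torsion_subgroup G H"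
    and w: "w \<in> streams (carrier G)"
    and V: "V \<subseteq> carrier G" "generate G V = carrier G"
    and visits: "\<forall>x\<in>V. \<exists>m\<ge>n. w !! m = x"
    and quotient: "tail_semigroup (G Mod H) (smap (\<lambda>x. H #> x) w) n = carrier (G Mod H)"
  shows "tail_semigroup G w n = carrier G"
proof -
  let ?S = "tail_semigroup G w n"
  have walk_in_S: "rwalk G w m \<in> ?S" if "m \<ge> n" for m
    using that by (intro semigroup_gen.sg_incl) blast
  have walk_closed: "rwalk G w m \<in> carrier G" for m
    by (rule rwalk_closed[OF monoid_axioms w])
  have S_closed: "?S \<subseteq> carrier G"
    using walk_closed by (intro semigroup_gen_subset[OF monoid_axioms]) blast
  have "carrier (G Mod H) \<subseteq> (\<lambda>x. H #> x) ` ?S"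
    using quotient tail_semigroup_image[OF quotient_map_hom w] by simp
  then have subgroup: "subgroup ?S G"
    using torsion S_closed
    by (intro subsemigroup_onto_quotient_is_subgroup) (auto intro: semigroup_gen.sg_mult)
  have "V \<subseteq> ?S"
  proof
    fix x assume "x \<in> V"
    then obtain m where m: "m \<ge> n" "w !! m = x" using visits by blast
    have "inv (rwalk G w m) \<otimes> rwalk G w (Suc m) \<in> ?S"
      using m(1)
      by (intro subgroup.m_closed[OF subgroup] subgroup.m_inv_closed[OF subgroup] walk_in_S) simp_all
    moreover have "inv (rwalk G w m) \<otimes> rwalk G w (Suc m) = x"
      using m(2) walk_closed snth_in[OF w, of m] by (simp add: m_assoc[symmetric])
    ultimately show "x \<in> ?S" by simp
  qed
  then have "carrier G \<subseteq> ?S"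
    using generate_subgroup_incl[OF _ subgroup] V(2) by blast
  with S_closed show ?thesis by blast
qed

section \<open>Streams of independent samples\<close>

lemma (in prob_space) emeasure_scylinder:
  assumes "set As \<subseteq> sets M"
  shows "emeasure (stream_space M) (scylinder (space M) As) = prod_list (map (emeasure M) As)"
  using assms
proof (induct As)
  case Nil
  interpret S: prob_space "stream_space M" by (rule prob_space_stream_space)
  show ?case using S.emeasure_space_1 by (simp add: space_stream_space)
next
  case (Cons A As)
  then have A: "A \<in> sets M" and As: "set As \<subseteq> sets M" by auto
  have cylinder: "scylinder (space M) (A # As) \<in> sets (stream_space M)"
    using Cons.prems by (intro sets_scylinder) auto
  have Stream_section: "{w \<in> space (stream_space M). t ## w \<in> scylinder (space M) (A # As)}
      = (if t \<in> A then scylinder (space M) As else {})" if "t \<in> space M" for t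
    using that scylinder_streams[of "space M" As] by (auto simp: space_stream_space streams_Stream)
  have "emeasure (stream_space M) (scylinder (space M) (A # As))
     = (\<integral>\<^sup>+t. emeasure (stream_space M) {w\<in>space (stream_space M). t ## w \<in> scylinder (space M) (A # As)} \<partial>M)"
    by (rule emeasure_stream_space[OF cylinder])
  also have "\<dots> = (\<integral>\<^sup>+t. emeasure (stream_space M) (scylinder (space M) As) * indicator A t \<partial>M)"
    by (intro nn_integral_cong, subst Stream_section) (auto split: split_indicator)
  also have "\<dots> = emeasure (stream_space M) (scylinder (space M) As) * emeasure M A"
    using A by (simp add: nn_integral_cmult_indicator)
  finally show ?case using Cons.hyps[OF As] by (simp add: mult.commute)
qed

lemma smap_vimage_scylinder:
  "smap f -` scylinder UNIV As = scylinder UNIV (map (\<lambda>A. f -` A) As)"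
  by (induct As) auto

lemma stream_space_map_pmf:
  "stream_space (measure_pmf (map_pmf f p)) =
     distr (stream_space (measure_pmf p)) (stream_space (measure_pmf (map_pmf f p))) (smap f)"
  (is "?L = ?R")
proof (rule stream_space_eq_scylinder[where S = "measure_pmf (map_pmf f p)" and G = UNIV and C = "{UNIV}"])
  have smap: "smap f \<in> measurable (stream_space (measure_pmf p)) (stream_space (measure_pmf (map_pmf f p)))"
    by (intro measurable_smap) simp
  show "prob_space ?L"
    by (rule prob_space.prob_space_stream_space[OF prob_space_measure_pmf])
  show "prob_space ?R"
    by (intro prob_space.prob_space_distr[OF prob_space.prob_space_stream_space[OF prob_space_measure_pmf]] smap)
  show "Int_stable UNIV" by (simp add: Int_stable_def)
  show "sets (measure_pmf (map_pmf f p)) = sets (sigma (space (measure_pmf (map_pmf f p))) UNIV)"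
    by (simp, metis Pow_UNIV sigma_algebra.sigma_sets_eq sigma_algebra_Pow)
  show "countable {UNIV}" "{UNIV} \<subseteq> UNIV" "\<Union>{UNIV} = space (measure_pmf (map_pmf f p))"
    "UNIV \<subseteq> Pow (space (measure_pmf (map_pmf f p)))" by auto
  show "sets ?L = sets (stream_space (measure_pmf (map_pmf f p)))"
    "sets ?R = sets (stream_space (measure_pmf (map_pmf f p)))" by simp_all
  fix As
  have "emeasure ?R (scylinder UNIV As)
      = emeasure (stream_space (measure_pmf p)) (scylinder UNIV (map (\<lambda>A. f -` A) As))"
    by (subst emeasure_distr[OF smap])
       (auto intro!: sets_scylinder[where S = "measure_pmf (map_pmf f p)", simplified]
             simp: smap_vimage_scylinder space_stream_space)
  also have "\<dots> = prod_list (map (emeasure (measure_pmf (map_pmf f p))) As)"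
    by (subst prob_space.emeasure_scylinder[OF prob_space_measure_pmf, simplified])
       (induct As, simp_all)
  also have "\<dots> = emeasure ?L (scylinder UNIV As)"
    by (rule prob_space.emeasure_scylinder[OF prob_space_measure_pmf, symmetric, simplified])
  finally show "emeasure ?L (scylinder (space (measure_pmf (map_pmf f p))) As) =
      emeasure ?R (scylinder (space (measure_pmf (map_pmf f p))) As)" by simp
qed

lemma AE_streams_set_pmf: "AE w in stream_space (measure_pmf p). w \<in> streams (set_pmf p)"
proof -
  have "AE w in stream_space (measure_pmf p). stream_all (\<lambda>x. x \<in> set_pmf p) w"
    by (rule prob_space.AE_stream_all[OF prob_space_measure_pmf]) (auto simp: AE_measure_pmf)
  then show ?thesis by (simp add: stream_all_def streams_iff_sset subset_eq)
qed

text \<open>Conditioning on the first step, the probability c of never visiting x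
  satisfies c = c (1 - pmf p x), so c = 0.\<close>
lemma AE_stream_visits:
  assumes x: "x \<in> set_pmf p"
  shows "AE w in stream_space (measure_pmf p). \<exists>m\<ge>n. w !! m = x"
proof -
  let ?S = "stream_space (measure_pmf p)"
  interpret S: prob_space ?S by (rule prob_space.prob_space_stream_space[OF prob_space_measure_pmf])
  have [measurable]: "Measurable.pred ?S (\<lambda>w. w !! m = x)" for m
    by measurable
  define c where "c = S.prob {w \<in> space ?S. \<forall>m. w !! m \<noteq> x}"
  have avoid_Stream: "(\<forall>m. (t ## w) !! m \<noteq> x) \<longleftrightarrow> t \<noteq> x \<and> (\<forall>m. w !! m \<noteq> x)" for t w
    by (metis Stream_snth old.nat.exhaust old.nat.simps(4) old.nat.simps(5))
  have "ennreal c = (\<integral>\<^sup>+t. S.prob {w \<in> space ?S. \<forall>m. (t ## w) !! m \<noteq> x} \<partial>measure_pmf p)"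
    unfolding c_def by (rule prob_space.prob_stream_space[OF prob_space_measure_pmf]) measurable
  also have "\<dots> = (\<integral>\<^sup>+t. ennreal c * indicator (- {x}) t \<partial>measure_pmf p)"
    by (intro nn_integral_cong) (simp add: avoid_Stream c_def split: split_indicator)
  also have "\<dots> = ennreal c * ennreal (1 - pmf p x)"
    by (simp add: nn_integral_cmult_indicator measure_pmf.emeasure_eq_measure
        measure_pmf.prob_compl[of "{x}", simplified] measure_pmf_single Compl_eq_Diff_UNIV)
  finally have "c = c * (1 - pmf p x)"
    using pmf_le_1[of p x] by (simp add: c_def ennreal_mult'[symmetric])
  with x have "c = 0" by (simp add: set_pmf_iff algebra_simps)
  then have visits: "AE w in ?S. \<exists>m. w !! m = x"
    by (subst AE_iff_measurable[OF _ refl]) (auto simp: c_def S.emeasure_eq_measure)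
  show ?thesis
  proof (induct n)
    case 0 then show ?case using visits by simp
  next
    case (Suc n)
    have "(\<exists>m\<ge>Suc n. (t ## w) !! m = x) \<longleftrightarrow> (\<exists>m\<ge>n. w !! m = x)" for t w
      by (metis Suc_le_D Suc_le_mono Stream_snth old.nat.simps(5))
    then show ?case
      by (subst prob_space.AE_stream_space[OF prob_space_measure_pmf]) (auto intro: Suc)
  qed
qed


lemma sets_streams_stake:
  assumes "countable S"
  shows "{w \<in> streams S. F (stake k w)} \<in> sets (stream_space (measure_pmf p))"
proof -
  let ?L = "{xs \<in> lists S. length xs = k \<and> F xs}"
  have [measurable]: "Measurable.pred (stream_space (measure_pmf p)) (\<lambda>w. w !! i = x)" for i x
    by measurable
  have "{w \<in> streams S. F (stake k w)}
      = streams S \<inter> (\<Union>xs\<in>?L. {w \<in> space (stream_space (measure_pmf p)). \<forall>i<k. w !! i = xs ! i})"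
  proof (safe, goal_cases)
    case (1 w)
    moreover have "stake k w \<in> lists S"
      using 1 by (auto simp: in_set_conv_nth streams_iff_snth)
    ultimately show ?case
      by (auto simp: space_stream_space intro!: bexI[where x = "stake k w"])
  next
    case (2 w xs)
    then have "stake k w = xs" by (auto intro!: nth_equalityI)
    with 2 show ?case by simp
  qed
  also have "\<dots> \<in> sets (stream_space (measure_pmf p))"
    using assms countable_lists[OF assms]
    by (intro sets.Int streams_sets sets.countable_UN'') (auto intro: countable_subset)
  finally show ?thesis .
qed

lemma ex_nonempty_list_in_image:
  "(\<exists>xs. xs \<noteq> [] \<and> set xs \<subseteq> f ` A \<and> P xs) \<longleftrightarrow> (\<exists>ys. ys \<noteq> [] \<and> set ys \<subseteq> A \<and> P (map f ys))"
proof
  assume "\<exists>xs. xs \<noteq> [] \<and> set xs \<subseteq> f ` A \<and> P xs"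
  then obtain xs where "xs \<noteq> []" "xs \<in> lists (f ` A)" "P xs" by auto
  then show "\<exists>ys. ys \<noteq> [] \<and> set ys \<subseteq> A \<and> P (map f ys)"
    unfolding lists_image by auto
next
  assume "\<exists>ys. ys \<noteq> [] \<and> set ys \<subseteq> A \<and> P (map f ys)"
  then obtain ys where "ys \<noteq> []" "set ys \<subseteq> A" "P (map f ys)" by blast
  then show "\<exists>xs. xs \<noteq> [] \<and> set xs \<subseteq> f ` A \<and> P xs"
    by (intro exI[of _ "map f ys"]) auto
qed

text \<open>Whether g lies in the tail semigroup is witnessed by a finite product of walk
  positions, which depends on finitely many increments; there are countably many g and
  countably many index lists.\<close>
lemma sets_tail_semigroup_eq_carrier:
  assumes S: "countable S" "S \<subseteq> carrier K" and K: "monoid K" "countable (carrier K)"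
  shows "{w \<in> streams S. tail_semigroup K w n = carrier K} \<in> sets (stream_space (measure_pmf p))"
proof -
  define I where "I = {idx. idx \<noteq> [] \<and> set idx \<subseteq> {n..}}"
  define F where "F g idx xs \<longleftrightarrow> g = lprod K (map (rwalk K (xs @- sconst undefined)) idx)" for g idx xs
  have walk: "{rwalk K w m | m. m \<ge> n} = rwalk K w ` {n..}" for w by auto
  have tail: "g \<in> tail_semigroup K w n \<longleftrightarrow> (\<exists>idx\<in>I. F g idx (stake (Max (set idx)) w))"
    and tail_closed: "tail_semigroup K w n \<subseteq> carrier K"
    if "w \<in> streams S" for g w
  proof -
    have "w \<in> streams (carrier K)" using that S(2) streams_mono by blast
    then have walk_closed: "rwalk K w ` {n..} \<subseteq> carrier K" using rwalk_closed[OF K(1)] by auto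
    have prefix: "F g idx (stake (Max (set idx)) w) \<longleftrightarrow> g = lprod K (map (rwalk K w) idx)" for idx
    proof -
      have "map (rwalk K (stake (Max (set idx)) w @- sconst undefined)) idx = map (rwalk K w) idx"
        by (intro map_cong[OF refl] rwalk_shift_stake Max_ge) auto
      then show ?thesis by (simp only: F_def)
    qed
    show "g \<in> tail_semigroup K w n \<longleftrightarrow> (\<exists>idx\<in>I. F g idx (stake (Max (set idx)) w))"
      unfolding walk semigroup_gen_iff_lprod[OF K(1) walk_closed] ex_nonempty_list_in_image
      by (simp add: I_def prefix)
    show "tail_semigroup K w n \<subseteq> carrier K"
      unfolding walk by (rule semigroup_gen_subset[OF K(1) walk_closed])
  qed
  have tail_eq_carrier: "tail_semigroup K w n = carrier K \<longleftrightarrow>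
      (\<forall>g\<in>carrier K. \<exists>idx\<in>I. F g idx (stake (Max (set idx)) w))"
    if "w \<in> streams S" for w
    using tail[OF that] tail_closed[OF that] by blast
  have "{w \<in> streams S. tail_semigroup K w n = carrier K}
      = streams S \<inter> (\<Inter>g\<in>carrier K. \<Union>idx\<in>I. {w \<in> streams S. F g idx (stake (Max (set idx)) w)})"
  proof (rule Set.set_eqI)
    fix w
    show "w \<in> {w \<in> streams S. tail_semigroup K w n = carrier K} \<longleftrightarrow>
      w \<in> streams S \<inter> (\<Inter>g\<in>carrier K. \<Union>idx\<in>I. {w \<in> streams S. F g idx (stake (Max (set idx)) w)})"
      by (cases "w \<in> streams S") (simp_all add: tail_eq_carrier)
  qed
  also have "\<dots> \<in> sets (stream_space (measure_pmf p))"
  proof (intro sets.Int streams_sets sets.countable_INT'' sets.countable_UN'' sets_streams_stake)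
    show "countable I" by (simp add: I_def)
  qed (use S K sets.top[of "stream_space (measure_pmf p)"] in \<open>auto simp: space_stream_space\<close>)
  finally show ?thesis .
qed

lemma AE_tail_semigroup_map_pmf:
  assumes K: "monoid K" "countable (carrier K)" and f: "f ` set_pmf \<nu> \<subseteq> carrier K"
  shows "(AE w in stream_space (measure_pmf (map_pmf f \<nu>)). tail_semigroup K w n = carrier K)
     \<longleftrightarrow> (AE w in stream_space (measure_pmf \<nu>). tail_semigroup K (smap f w) n = carrier K)"
proof -
  let ?\<mu> = "map_pmf f \<nu>"
  \<comment> \<open>The event is only known to be measurable on streams over the countable support.\<close>
  let ?P = "\<lambda>w. w \<in> streams (set_pmf ?\<mu>) \<longrightarrow> tail_semigroup K w n = carrier K"
  have "{w \<in> space (stream_space ?\<mu>). ?P w} =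
      (space (stream_space ?\<mu>) - streams (set_pmf ?\<mu>)) \<union>
      {w \<in> streams (set_pmf ?\<mu>). tail_semigroup K w n = carrier K}"
    by (auto simp: space_stream_space)
  also have "\<dots> \<in> sets (stream_space ?\<mu>)"
    using f by (intro sets.Un sets.Diff sets.top streams_sets sets_tail_semigroup_eq_carrier K) auto
  finally have event: "{w \<in> space (stream_space ?\<mu>). ?P w} \<in> sets (stream_space ?\<mu>)" .
  have "(AE w in stream_space ?\<mu>. tail_semigroup K w n = carrier K) \<longleftrightarrow> (AE w in stream_space ?\<mu>. ?P w)"
    by (rule eventually_cong[OF AE_streams_set_pmf]) simp
  also have "\<dots> \<longleftrightarrow> (AE w in distr (stream_space \<nu>) (stream_space ?\<mu>) (smap f). ?P w)"
    by (subst (1) stream_space_map_pmf) (rule refl)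
  also have "\<dots> \<longleftrightarrow> (AE w in stream_space \<nu>. ?P (smap f w))"
    by (rule AE_distr_iff[OF measurable_smap event]) simp
  also have "\<dots> \<longleftrightarrow> (AE w in stream_space \<nu>. tail_semigroup K (smap f w) n = carrier K)"
    by (rule eventually_cong[OF AE_streams_set_pmf]) (auto intro: smap_streams)
  finally show ?thesis .
qed

section \<open>Symmetric measures and lifts to the quotient\<close>

context group
begin

lemma pmf_map_inv:
  assumes "set_pmf \<nu> \<subseteq> carrier G" "g \<in> carrier G"
  shows "pmf (map_pmf (m_inv G) \<nu>) g = pmf \<nu> (inv g)"
proof -
  have "inv x = g \<longleftrightarrow> x = inv g" if "x \<in> carrier G" for x
    using that assms(2) by auto
  then have "m_inv G -` {g} \<inter> set_pmf \<nu> = {inv g} \<inter> set_pmf \<nu>"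
    using assms(1) by auto
  then have "measure \<nu> (m_inv G -` {g} \<inter> set_pmf \<nu>) = measure \<nu> ({inv g} \<inter> set_pmf \<nu>)"
    by simp
  then show ?thesis
    by (simp only: pmf_map measure_Int_set_pmf measure_pmf_single)
qed

lemma symmetric_pmf_iff_map_inv:
  assumes "set_pmf \<nu> \<subseteq> carrier G"
  shows "symmetric_pmf G \<nu> \<longleftrightarrow> map_pmf (m_inv G) \<nu> = \<nu>"
proof
  assume sym: "symmetric_pmf G \<nu>"
  show "map_pmf (m_inv G) \<nu> = \<nu>"
  proof (rule pmf_eqI)
    fix g
    show "pmf (map_pmf (m_inv G) \<nu>) g = pmf \<nu> g"
    proof (cases "g \<in> carrier G")
      case True
      then have "pmf \<nu> g = pmf \<nu> (inv g)" using sym unfolding symmetric_pmf_def by blast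
      with True show ?thesis by (simp add: pmf_map_inv[OF assms])
    next
      case False
      with assms have "g \<notin> set_pmf (map_pmf (m_inv G) \<nu>)" "g \<notin> set_pmf \<nu>" by auto
      then show ?thesis by (metis pmf_eq_0_set_pmf)
    qed
  qed
next
  assume inv_invariant: "map_pmf (m_inv G) \<nu> = \<nu>"
  show "symmetric_pmf G \<nu>"
    unfolding symmetric_pmf_def
  proof
    fix g assume "g \<in> carrier G"
    then have "pmf (map_pmf (m_inv G) \<nu>) (inv g) = pmf \<nu> g"
      by (simp add: pmf_map_inv[OF assms])
    then show "pmf \<nu> g = pmf \<nu> (inv g)" by (simp add: inv_invariant)
  qed
qed

end

definition symmetrize :: "('a, 'b) monoid_scheme \<Rightarrow> 'a pmf \<Rightarrow> 'a pmf" where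
  "symmetrize G \<nu> = bind_pmf (bernoulli_pmf (1/2)) (\<lambda>b. if b then \<nu> else map_pmf (m_inv G) \<nu>)"

lemma set_pmf_symmetrize: "set_pmf (symmetrize G \<nu>) = set_pmf \<nu> \<union> m_inv G ` set_pmf \<nu>"
  by (auto simp: symmetrize_def split: if_splits)

lemma map_pmf_symmetrize:
  assumes "map_pmf f (map_pmf (m_inv G) \<nu>) = map_pmf f \<nu>"
  shows "map_pmf f (symmetrize G \<nu>) = map_pmf f \<nu>"
  using assms by (simp add: symmetrize_def map_bind_pmf if_distrib cong: if_cong)

lemma map_Not_bernoulli_half: "map_pmf Not (bernoulli_pmf (1/2)) = bernoulli_pmf (1/2)"
proof (rule pmf_eqI)
  fix b :: bool
  have "pmf (map_pmf Not (bernoulli_pmf (1/2))) (\<not> \<not> b) = pmf (bernoulli_pmf (1/2)) (\<not> b)"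
    by (rule pmf_map_inj') (simp add: inj_def)
  then show "pmf (map_pmf Not (bernoulli_pmf (1/2))) b = pmf (bernoulli_pmf (1/2)) b" by simp
qed

lemma (in group) symmetric_pmf_symmetrize:
  assumes "set_pmf \<nu> \<subseteq> carrier G"
  shows "symmetric_pmf G (symmetrize G \<nu>)"
proof -
  have inv_inv: "map_pmf (m_inv G) (map_pmf (m_inv G) \<nu>) = \<nu>"
    unfolding map_pmf_comp using assms by (intro map_pmf_idI) auto
  have "map_pmf (m_inv G) (symmetrize G \<nu>) =
      bind_pmf (map_pmf Not (bernoulli_pmf (1/2))) (\<lambda>b. if b then \<nu> else map_pmf (m_inv G) \<nu>)"
    by (simp add: symmetrize_def map_bind_pmf bind_map_pmf inv_inv if_distrib cong: if_cong)
       (rule bind_pmf_cong; simp)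
  then have "map_pmf (m_inv G) (symmetrize G \<nu>) = symmetrize G \<nu>"
    by (simp add: map_Not_bernoulli_half symmetrize_def)
  moreover have "set_pmf (symmetrize G \<nu>) \<subseteq> carrier G"
    using assms by (auto simp: set_pmf_symmetrize)
  ultimately show ?thesis by (simp add: symmetric_pmf_iff_map_inv)
qed

context normal
begin

lemma coset_eq_of_mem:
  assumes "c \<in> carrier (G Mod H)" "x \<in> c"
  shows "H #> x = c"
  using assms repr_independence subgroup_axioms by (auto simp: carrier_FactGroup)

lemma coset_subset_carrier: "c \<in> carrier (G Mod H) \<Longrightarrow> c \<subseteq> carrier G"
  by (auto simp: carrier_FactGroup r_coset_def)

lemma coset_nonempty: "c \<in> carrier (G Mod H) \<Longrightarrow> c \<noteq> {}"
  using rcos_self subgroup_axioms by (auto simp: carrier_FactGroup)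

text \<open>A geometric law pushed through an enumeration of the countable coset c has
  support exactly c.\<close>
lemma exists_pmf_lift_to_cosets:
  assumes "countable (carrier G)" "set_pmf \<mu> \<subseteq> carrier (G Mod H)"
  obtains \<nu> where "set_pmf \<nu> = \<Union> (set_pmf \<mu>)" "map_pmf (\<lambda>x. H #> x) \<nu> = \<mu>"
proof
  define \<kappa> where "\<kappa> c = map_pmf (from_nat_into c) (geometric_pmf (1/2))" for c :: "'a set"
  have set_\<kappa>: "set_pmf (\<kappa> c) = c" if "c \<in> set_pmf \<mu>" for c
  proof -
    have "c \<in> carrier (G Mod H)" using that assms(2) by auto
    then have "countable c" "c \<noteq> {}"
      using countable_subset[OF coset_subset_carrier assms(1)] coset_nonempty by auto
    then show ?thesis by (simp add: \<kappa>_def set_pmf_geometric)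
  qed
  show "set_pmf (bind_pmf \<mu> \<kappa>) = \<Union> (set_pmf \<mu>)" by (simp add: set_\<kappa>)
  have "map_pmf (\<lambda>x. H #> x) (\<kappa> c) = return_pmf c" if "c \<in> set_pmf \<mu>" for c
  proof -
    have "c \<in> carrier (G Mod H)" using that assms(2) by auto
    then have "map_pmf (\<lambda>x. H #> x) (\<kappa> c) = map_pmf (\<lambda>_. c) (\<kappa> c)"
      using coset_eq_of_mem set_\<kappa>[OF that] by (intro map_pmf_cong) auto
    then show ?thesis by simp
  qed
  then show "map_pmf (\<lambda>x. H #> x) (bind_pmf \<mu> \<kappa>) = \<mu>"
    by (simp add: map_bind_pmf bind_return_pmf' cong: bind_pmf_cong)
qed

lemma generate_eq_carrier_if_covers_quotient:
  assumes A: "A \<subseteq> carrier (G Mod H)" "A \<noteq> {}" "generate (G Mod H) A = carrier (G Mod H)"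
    and B: "\<Union> A \<subseteq> B" "B \<subseteq> carrier G"
  shows "generate G B = carrier G"
proof -
  interpret \<pi>: group_hom G "G Mod H" "\<lambda>x. H #> x" by (rule quotient_map_hom)
  let ?\<Gamma> = "generate G B"
  have \<Gamma>: "subgroup ?\<Gamma> G" by (rule generate_is_subgroup[OF B(2)])
  have B_in_\<Gamma>: "B \<subseteq> ?\<Gamma>" by (auto intro: generate.incl)
  obtain c x where c: "c \<in> A" "x \<in> c" using A(1,2) coset_nonempty by blast
  have cK: "c \<in> carrier (G Mod H)" and xG: "x \<in> carrier G"
    using c A(1) coset_subset_carrier by auto
  have H_in_\<Gamma>: "H \<subseteq> ?\<Gamma>"
  proof
    fix h assume h: "h \<in> H"
    have "h \<otimes> x \<in> c" using rcosI[OF h subset xG] coset_eq_of_mem[OF cK c(2)] by simp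
    then have "h \<otimes> x \<in> ?\<Gamma>" "x \<in> ?\<Gamma>" using c B B_in_\<Gamma> by auto
    then have "(h \<otimes> x) \<otimes> inv x \<in> ?\<Gamma>"
      using subgroup.m_closed[OF \<Gamma>] subgroup.m_inv_closed[OF \<Gamma>] by blast
    then show "h \<in> ?\<Gamma>" using h xG subset by (simp add: m_assoc subsetD)
  qed
  have "A \<subseteq> (\<lambda>x. H #> x) ` B"
  proof
    fix a assume a: "a \<in> A"
    then have aK: "a \<in> carrier (G Mod H)" using A(1) by auto
    then obtain y where "y \<in> a" using coset_nonempty by blast
    then show "a \<in> (\<lambda>x. H #> x) ` B"
      using a B(1) coset_eq_of_mem[OF aK] by (intro image_eqI[of _ _ y]) auto
  qed
  then have "generate (G Mod H) A \<subseteq> generate (G Mod H) ((\<lambda>x. H #> x) ` B)"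
    by (rule \<pi>.H.mono_generate)
  then have quotient_covered: "carrier (G Mod H) \<subseteq> (\<lambda>x. H #> x) ` ?\<Gamma>"
    using A(3) \<pi>.generate_img[OF B(2)] by simp
  show ?thesis
  proof
    show "?\<Gamma> \<subseteq> carrier G" by (rule generate_incl[OF B(2)])
    show "carrier G \<subseteq> ?\<Gamma>"
    proof
      fix g assume g: "g \<in> carrier G"
      then have "H #> g \<in> carrier (G Mod H)" by (auto simp: carrier_FactGroup)
      then obtain y where y: "y \<in> ?\<Gamma>" "H #> g = H #> y"
        using quotient_covered by auto
      have "g \<in> H #> y" using y(2) rcos_self[OF g subgroup_axioms] by simp
      then obtain h where "h \<in> H" "g = h \<otimes> y" by (auto simp: r_coset_def)
      then show "g \<in> ?\<Gamma>" using H_in_\<Gamma> y(1) by (simp add: subgroup.m_closed[OF \<Gamma>] subsetD)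
    qed
  qed
qed

lemma countable_carrier_quotient: "countable (carrier G) \<Longrightarrow> countable (carrier (G Mod H))"
  by (simp add: carrier_FactGroup)

lemma exists_symmetric_generating_lift:
  assumes "countable (carrier G)"
    and \<mu>: "set_pmf \<mu> \<subseteq> carrier (G Mod H)" "symmetric_pmf (G Mod H) \<mu>"
      "generate (G Mod H) (set_pmf \<mu>) = carrier (G Mod H)"
  obtains \<nu> where "set_pmf \<nu> \<subseteq> carrier G" "symmetric_pmf G \<nu>"
    "generate G (set_pmf \<nu>) = carrier G" "map_pmf (\<lambda>x. H #> x) \<nu> = \<mu>"
proof -
  interpret K: group "G Mod H" by (rule factorgroup_is_group)
  interpret \<pi>: group_hom G "G Mod H" "\<lambda>x. H #> x" by (rule quotient_map_hom)
  obtain \<nu>\<^sub>0 where \<nu>\<^sub>0: "set_pmf \<nu>\<^sub>0 = \<Union> (set_pmf \<mu>)" "map_pmf (\<lambda>x. H #> x) \<nu>\<^sub>0 = \<mu>"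
    using exists_pmf_lift_to_cosets[OF assms(1) \<mu>(1)] by blast
  have \<nu>\<^sub>0_closed: "set_pmf \<nu>\<^sub>0 \<subseteq> carrier G"
    using \<nu>\<^sub>0(1) \<mu>(1) coset_subset_carrier by auto
  have "set_pmf (symmetrize G \<nu>\<^sub>0) \<subseteq> carrier G"
    using \<nu>\<^sub>0_closed by (auto simp: set_pmf_symmetrize)
  moreover have "symmetric_pmf G (symmetrize G \<nu>\<^sub>0)"
    by (rule symmetric_pmf_symmetrize[OF \<nu>\<^sub>0_closed])
  moreover have "generate G (set_pmf (symmetrize G \<nu>\<^sub>0)) = carrier G"
    using \<mu> \<nu>\<^sub>0_closed \<nu>\<^sub>0(1) set_pmf_not_empty[of \<mu>]
    by (intro generate_eq_carrier_if_covers_quotient[of "set_pmf \<mu>"]) (auto simp: set_pmf_symmetrize)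
  moreover have "map_pmf (\<lambda>x. H #> x) (symmetrize G \<nu>\<^sub>0) = \<mu>"
  proof -
    have "map_pmf (\<lambda>x. H #> x) (map_pmf (m_inv G) \<nu>\<^sub>0) =
        map_pmf (m_inv (G Mod H)) (map_pmf (\<lambda>x. H #> x) \<nu>\<^sub>0)"
      unfolding map_pmf_comp using \<nu>\<^sub>0_closed by (intro map_pmf_cong) auto
    also have "\<dots> = map_pmf (\<lambda>x. H #> x) \<nu>\<^sub>0"
      using \<mu>(1,2) \<nu>\<^sub>0(2) K.symmetric_pmf_iff_map_inv by simp
    finally show ?thesis
      using \<nu>\<^sub>0(2) map_pmf_symmetrize by metis
  qed
  ultimately show ?thesis by (rule that)
qed

lemma symmetric_generating_image:
  assumes \<nu>: "set_pmf \<nu> \<subseteq> carrier G" "symmetric_pmf G \<nu>" "generate G (set_pmf \<nu>) = carrier G"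
  shows "set_pmf (map_pmf (\<lambda>x. H #> x) \<nu>) \<subseteq> carrier (G Mod H)"
    and "symmetric_pmf (G Mod H) (map_pmf (\<lambda>x. H #> x) \<nu>)"
    and "generate (G Mod H) (set_pmf (map_pmf (\<lambda>x. H #> x) \<nu>)) = carrier (G Mod H)"
proof -
  interpret K: group "G Mod H" by (rule factorgroup_is_group)
  interpret \<pi>: group_hom G "G Mod H" "\<lambda>x. H #> x" by (rule quotient_map_hom)
  show closed: "set_pmf (map_pmf (\<lambda>x. H #> x) \<nu>) \<subseteq> carrier (G Mod H)"
    using \<nu>(1) by (auto simp: carrier_FactGroup)
  have "map_pmf (m_inv (G Mod H)) (map_pmf (\<lambda>x. H #> x) \<nu>) = map_pmf (\<lambda>x. H #> x) (map_pmf (m_inv G) \<nu>)"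
    unfolding map_pmf_comp using \<nu>(1) by (intro map_pmf_cong) auto
  also have "\<dots> = map_pmf (\<lambda>x. H #> x) \<nu>"
    using \<nu>(1,2) symmetric_pmf_iff_map_inv by simp
  finally show "symmetric_pmf (G Mod H) (map_pmf (\<lambda>x. H #> x) \<nu>)"
    using K.symmetric_pmf_iff_map_inv[OF closed] by simp
  show "generate (G Mod H) (set_pmf (map_pmf (\<lambda>x. H #> x) \<nu>)) = carrier (G Mod H)"
    using \<pi>.generate_img[OF \<nu>(1)] \<nu>(3) by (simp add: carrier_FactGroup)
qed

lemma AR_pair_quotient_iff:
  assumes "countable (carrier G)" "set_pmf \<nu> \<subseteq> carrier G"
  shows "AR_pair (G Mod H) (map_pmf (\<lambda>x. H #> x) \<nu>) \<longleftrightarrow>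
    (\<forall>n\<ge>1. AE w in stream_space (measure_pmf \<nu>).
       tail_semigroup (G Mod H) (smap (\<lambda>x. H #> x) w) n = carrier (G Mod H))"
proof -
  interpret K: group "G Mod H" by (rule factorgroup_is_group)
  have "(\<lambda>x. H #> x) ` set_pmf \<nu> \<subseteq> carrier (G Mod H)"
    using assms(2) by (auto simp: carrier_FactGroup)
  then show ?thesis
    unfolding AR_pair_def
    using AE_tail_semigroup_map_pmf[OF K.monoid_axioms countable_carrier_quotient[OF assms(1)]]
    by blast
qed

lemma AR_group_quotient_if_AR_group:
  assumes "countable (carrier G)" "AR_group G"
  shows "AR_group (G Mod H)"
  unfolding AR_group_def
proof (intro allI impI, elim conjE)
  fix \<mu> assume \<mu>: "set_pmf \<mu> \<subseteq> carrier (G Mod H)" "symmetric_pmf (G Mod H) \<mu>"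
    "generate (G Mod H) (set_pmf \<mu>) = carrier (G Mod H)"
  obtain \<nu> where \<nu>: "set_pmf \<nu> \<subseteq> carrier G" "symmetric_pmf G \<nu>"
    "generate G (set_pmf \<nu>) = carrier G" and \<mu>_eq: "\<mu> = map_pmf (\<lambda>x. H #> x) \<nu>"
    using exists_symmetric_generating_lift[OF assms(1) \<mu>] by metis
  have AR: "AR_pair G \<nu>" using assms(2) \<nu> unfolding AR_group_def by blast
  have "AE w in stream_space (measure_pmf \<nu>).
      tail_semigroup (G Mod H) (smap (\<lambda>x. H #> x) w) n = carrier (G Mod H)" if "n \<ge> 1" for n
  proof -
    have "AE w in stream_space (measure_pmf \<nu>). tail_semigroup G w n = carrier G"
      using AR that unfolding AR_pair_def by blast
    then show ?thesis
      using AE_streams_set_pmf[of \<nu>]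
    proof eventually_elim
      case (elim w)
      then have "w \<in> streams (carrier G)" using \<nu>(1) streams_mono by blast
      with elim show ?case
        by (simp add: tail_semigroup_image[OF quotient_map_hom] carrier_FactGroup)
    qed
  qed
  then show "AR_pair (G Mod H) \<mu>"
    unfolding \<mu>_eq using AR_pair_quotient_iff[OF assms(1) \<nu>(1)] by blast
qed

lemma AR_group_if_AR_group_quotient:
  assumes "countable (carrier G)" "torsion_subgroup G H" "AR_group (G Mod H)"
  shows "AR_group G"
  unfolding AR_group_def
proof (intro allI impI, elim conjE)
  fix \<nu> assume \<nu>: "set_pmf \<nu> \<subseteq> carrier G" "symmetric_pmf G \<nu>" "generate G (set_pmf \<nu>) = carrier G"
  have "AR_pair (G Mod H) (map_pmf (\<lambda>x. H #> x) \<nu>)"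
    using assms(3) symmetric_generating_image[OF \<nu>] unfolding AR_group_def by blast
  then have quotient: "AE w in stream_space (measure_pmf \<nu>).
      tail_semigroup (G Mod H) (smap (\<lambda>x. H #> x) w) n = carrier (G Mod H)" if "n \<ge> 1" for n
    using that AR_pair_quotient_iff[OF assms(1) \<nu>(1)] by blast
  have visits: "AE w in stream_space (measure_pmf \<nu>). \<forall>x\<in>set_pmf \<nu>. \<exists>m\<ge>n. w !! m = x" for n
    by (subst AE_ball_countable) (auto intro: AE_stream_visits)
  show "AR_pair G \<nu>"
    unfolding AR_pair_def
  proof (intro allI impI)
    fix n :: nat assume "n \<ge> 1"
    show "AE w in stream_space (measure_pmf \<nu>). tail_semigroup G w n = carrier G"
      using quotient[OF \<open>n \<ge> 1\<close>] visits[of n] AE_streams_set_pmf[of \<nu>]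
    proof eventually_elim
      case (elim w)
      then have "w \<in> streams (carrier G)" using \<nu>(1) streams_mono by blast
      with elim show ?case
        using tail_semigroup_eq_carrier_if_quotient[OF assms(2) _ \<nu>(1,3)] by blast
    qed
  qed
qed

end

theorem theorem2:
  fixes G :: "('a, 'b) monoid_scheme" and H :: "'a set"
  assumes "group G"
    and "countable (carrier G)"
    and "H \<lhd> G"
    and "torsion_subgroup G H"
  shows "AR_group (G Mod H) \<longleftrightarrow> AR_group G"
proof -
  interpret normal H G by fact
  show ?thesis
    using AR_group_quotient_if_AR_group AR_group_if_AR_group_quotient assms(2,4) by blast
qed

end
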